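(* Let $R,r>0$ and let $K^{-1/2}_0$ and $\{\mathbb{E}(t)\}_{t\in[-1/2,1/2]}$ be as in the context (touching disks). Then $\{\mathbb{E}(t)\}$ is a resolution of the identity on $K^{-1/2}_0$; namely, $$\langle f,g\rangle_{-1/2}=\int_{-1/2}^{1/2}d\langle f,\mathbb{E}(t)g\rangle_{-1/2}\quad\text{for all } f,g\in K^{-1/2}_0.$$ Moreover, $\lim_{t\to s}\mathbb{E}(t)=\mathbb{E}(s)$ for all $s\in[-1/2,1/2]$ (strongly).
   Context: Identify $\mathbb{R}^2$ with $\mathbb{C}$; for $a\in\mathbb{R}\setminus\{0\}$ let $B_a$ be the open disk of radius $|a|$ centered at $(a,0)$. Fix $R,r>0$, $\Omega=B_R\cup B_{-r}$, $q_1=\frac1{2r}+\frac1{2R}$. For $k\neq0$ let $\mathbb{S}(k)=\frac{1}{2|k|}\mathrm{diag}(1-e^{-|k|q_1},\,1+e^{-|k|q_1})$. $K^{-1/2}_0$ is the Hilbert space of pairs $\hat\varphi=(\hat\varphi_1,\hat\varphi_2)^T$ of measurable complex functions on $\mathbb{R}$ (mod a.e.) with $\int_{\mathbb{R}}\hat\varphi^T\mathbb{S}\overline{\hat\varphi}\,dk<\infty$, inner product $\langle\psi,\varphi\rangle_{-1/2}=\int_{\mathbb{R}}\hat\psi^T\mathbb{S}\overline{\hat\varphi}\,dk$ (in the paper such a pair represents a boundary density on $\partial\Omega$ after pulling back by $z\mapsto1/z$, Fourier transforming and applying $P=\frac1{\sqrt2}\begin{bmatrix}-1&1\\1&1\end{bmatrix}$).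 For $s\in\mathbb{R}\cup\{\infty\}$ let $\mathcal{P}^1(s)(\hat\varphi_1,\hat\varphi_2)=(\chi_{(-\infty,s]}\hat\varphi_1,0)$, $\mathcal{P}^2(s)(\hat\varphi_1,\hat\varphi_2)=(0,\chi_{(-\infty,s]}\hat\varphi_2)$ (with $\chi_{(-\infty,\infty]}\equiv1$), $\mathbb{I}=\mathcal{P}^1(\infty)+\mathcal{P}^2(\infty)$, and $$\mathbb{E}(t)=\begin{cases}\mathcal{P}^2\!\left(-\frac{\ln(-2t)}{q_1}\right)-\mathcal{P}^2\!\left(\frac{\ln(-2t)}{q_1}\right),& t\in[-1/2,0),\\[2pt]\mathcal{P}^1\!\left(\frac{\ln(2t)}{q_1}\right)-\mathcal{P}^1\!\left(-\frac{\ln(2t)}{q_1}\right)+\mathbb{I},& t\in(0,1/2],\end{cases}\qquad \mathbb{E}(0)=\lim_{t\to0^+}\mathbb{E}(t).$$ A resolution of the identity means: each $\mathbb{E}(t)$ is an orthogonal projection, $\mathbb{E}(t)\mathbb{E}(s)=\mathbb{E}(\min(t,s))$, $\mathbb{E}$ is right-continuous, $\mathbb{E}(-1/2)=0$, $\mathbb{E}(1/2)=\mathbb{I}$. *)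

theory Defs
  imports "HOL-Analysis.Analysis"
begin

text \<open>A pair of (representatives of) functions on the Fourier side: (phi_1, phi_2).\<close>
type_synonym dens = "(real \<Rightarrow> complex) \<times> (real \<Rightarrow> complex)"

definition q1 :: "real \<Rightarrow> real \<Rightarrow> real" where
  "q1 R r = 1 / (2 * r) + 1 / (2 * R)"

text \<open>Diagonal entries of the weight matrix S(k) (k \<noteq> 0; the value at k = 0 is irrelevant, a null set).\<close>
definition S1 :: "real \<Rightarrow> real \<Rightarrow> real" where
  "S1 q k = (1 - exp (- \<bar>k\<bar> * q)) / (2 * \<bar>k\<bar>)"

definition S2 :: "real \<Rightarrow> real \<Rightarrow> real" where
  "S2 q k = (1 + exp (- \<bar>k\<bar> * q)) / (2 * \<bar>k\<bar>)"

definition inK :: "real \<Rightarrow> dens \<Rightarrow> bool" where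
  "inK q \<phi> \<longleftrightarrow> fst \<phi> \<in> borel_measurable lborel \<and> snd \<phi> \<in> borel_measurable lborel \<and>
     integrable lborel (\<lambda>k. S1 q k * (cmod (fst \<phi> k))\<^sup>2 + S2 q k * (cmod (snd \<phi> k))\<^sup>2)"

definition Kinner :: "real \<Rightarrow> dens \<Rightarrow> dens \<Rightarrow> complex" where
  "Kinner q \<psi> \<phi> = (LINT k|lborel. complex_of_real (S1 q k) * fst \<psi> k * cnj (fst \<phi> k)
                                  + complex_of_real (S2 q k) * snd \<psi> k * cnj (snd \<phi> k))"

definition Knorm :: "real \<Rightarrow> dens \<Rightarrow> real" where
  "Knorm q \<phi> = sqrt (Re (Kinner q \<phi> \<phi>))"

text \<open>Equality in K^{-1/2}_0 (elements are taken modulo a.e. equality).\<close>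
definition Keq :: "dens \<Rightarrow> dens \<Rightarrow> bool" where
  "Keq \<psi> \<phi> \<longleftrightarrow> (AE k in lborel. fst \<psi> k = fst \<phi> k \<and> snd \<psi> k = snd \<phi> k)"

definition dzero :: dens where "dzero = (\<lambda>k. 0, \<lambda>k. 0)"

definition dadd :: "dens \<Rightarrow> dens \<Rightarrow> dens" where
  "dadd \<psi> \<phi> = (\<lambda>k. fst \<psi> k + fst \<phi> k, \<lambda>k. snd \<psi> k + snd \<phi> k)"

definition dsub :: "dens \<Rightarrow> dens \<Rightarrow> dens" where
  "dsub \<psi> \<phi> = (\<lambda>k. fst \<psi> k - fst \<phi> k, \<lambda>k. snd \<psi> k - snd \<phi> k)"

definition dscale :: "complex \<Rightarrow> dens \<Rightarrow> dens" where
  "dscale a \<phi> = (\<lambda>k. a * fst \<phi> k, \<lambda>k. a * snd \<phi> k)"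

definition opadd :: "(dens \<Rightarrow> dens) \<Rightarrow> (dens \<Rightarrow> dens) \<Rightarrow> dens \<Rightarrow> dens" where
  "opadd A B \<phi> = dadd (A \<phi>) (B \<phi>)"

definition opsub :: "(dens \<Rightarrow> dens) \<Rightarrow> (dens \<Rightarrow> dens) \<Rightarrow> dens \<Rightarrow> dens" where
  "opsub A B \<phi> = dsub (A \<phi>) (B \<phi>)"

text \<open>P^1(s), P^2(s) for s in R \<union> {\<infinity>} (extended reals; chi_{(-\<infinity>,\<infinity>]} = 1).\<close>
definition P1 :: "ereal \<Rightarrow> dens \<Rightarrow> dens" where
  "P1 s \<phi> = (\<lambda>k. if ereal k \<le> s then fst \<phi> k else 0, \<lambda>k. 0)"

definition P2 :: "ereal \<Rightarrow> dens \<Rightarrow> dens" where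
  "P2 s \<phi> = (\<lambda>k. 0, \<lambda>k. if ereal k \<le> s then snd \<phi> k else 0)"

definition Iop :: "dens \<Rightarrow> dens" where
  "Iop = opadd (P1 \<infinity>) (P2 \<infinity>)"

text \<open>The family E(t); at t = 0 the value is the (strong) limit t \<rightarrow> 0+, which is P^2(\<infinity>).\<close>
definition Efam :: "real \<Rightarrow> real \<Rightarrow> dens \<Rightarrow> dens" where
  "Efam q t =
    (if t < 0 then opsub (P2 (ereal (- ln (- 2 * t) / q))) (P2 (ereal (ln (- 2 * t) / q)))
     else if 0 < t then opadd (opsub (P1 (ereal (ln (2 * t) / q))) (P1 (ereal (- ln (2 * t) / q)))) Iop
     else P2 \<infinity>)"

definition RS_has_integral :: "(real \<Rightarrow> complex) \<Rightarrow> (real \<Rightarrow> complex) \<Rightarrow> real \<Rightarrow> real \<Rightarrow> complex \<Rightarrow> bool" where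
  "RS_has_integral h F a b I \<longleftrightarrow>
    (\<forall>\<epsilon>>0. \<exists>\<delta>>0. \<forall>(n::nat) (x::nat \<Rightarrow> real) (\<xi>::nat \<Rightarrow> real).
       x 0 = a \<and> x n = b \<and>
       (\<forall>i<n. x i < x (Suc i) \<and> x (Suc i) - x i < \<delta> \<and> x i \<le> \<xi> i \<and> \<xi> i \<le> x (Suc i)) \<longrightarrow>
       cmod ((\<Sum>i<n. h (\<xi> i) * (F (x (Suc i)) - F (x i))) - I) < \<epsilon>)"

end

(*
  Each E(t) acts by multiplying the two Fourier components by indicator functions of frequency
  sets that grow with t, and the weight S(k) is diagonal. Hence every E(t) is an orthogonal
  projection, E(t) E(s) = E(min t s) amounts to intersecting these sets, E(-1/2) = 0 and
  E(1/2) = I. As t tends to s the indicators converge at every frequency k except the at most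
  four with exp (q k) or exp (-q k) equal to 2s or -2s, so strong continuity follows by
  dominated convergence. The Riemann-Stieltjes sums of the constant 1 against
  t \<mapsto> <f, E(t) g> telescope exactly to <f, E(1/2) g> - <f, E(-1/2) g> = <f, g>.
*)

theory Submission
  imports Defs
begin

lemma q1_pos: "0 < R \<Longrightarrow> 0 < r \<Longrightarrow> 0 < q1 R r"
  unfolding q1_def by (intro add_pos_pos) simp_all

lemma S1_nonneg: "0 \<le> q \<Longrightarrow> 0 \<le> S1 q k"
  unfolding S1_def by simp

lemma S2_nonneg: "0 \<le> S2 q k"
  unfolding S2_def by (simp add: add_nonneg_nonneg)

lemma S1_measurable [measurable]: "S1 q \<in> borel_measurable borel"
  unfolding S1_def by measurable

lemma S2_measurable [measurable]: "S2 q \<in> borel_measurable borel"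
  unfolding S2_def by measurable

definition Kenergy :: "real \<Rightarrow> dens \<Rightarrow> real \<Rightarrow> real" where
  "Kenergy q \<phi> k = S1 q k * (cmod (fst \<phi> k))\<^sup>2 + S2 q k * (cmod (snd \<phi> k))\<^sup>2"

lemma inK_iff_integrable_Kenergy:
  "inK q \<phi> \<longleftrightarrow> fst \<phi> \<in> borel_measurable borel \<and> snd \<phi> \<in> borel_measurable borel \<and>
     integrable lborel (Kenergy q \<phi>)"
  unfolding inK_def Kenergy_def measurable_lborel1 by simp

lemma Re_Kinner_self: "Re (Kinner q \<phi> \<phi>) = (LINT k|lborel. Kenergy q \<phi> k)"
proof -
  have "Kinner q \<phi> \<phi> = (LINT k|lborel. complex_of_real (Kenergy q \<phi> k))"
    unfolding Kinner_def Kenergy_def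
    by (simp add: mult.assoc complex_norm_square[symmetric])
  then show ?thesis by simp
qed

lemma Knorm_eq_sqrt_integral: "Knorm q \<phi> = sqrt (LINT k|lborel. Kenergy q \<phi> k)"
  unfolding Knorm_def Re_Kinner_self ..

definition restrict_dens :: "(real \<Rightarrow> bool) \<Rightarrow> (real \<Rightarrow> bool) \<Rightarrow> dens \<Rightarrow> dens" where
  "restrict_dens A B \<phi> = (\<lambda>k. if A k then fst \<phi> k else 0, \<lambda>k. if B k then snd \<phi> k else 0)"

lemma restrict_dens_linear:
  "restrict_dens A B (dadd (dscale a \<psi>) \<phi>) = dadd (dscale a (restrict_dens A B \<psi>)) (restrict_dens A B \<phi>)"
  unfolding restrict_dens_def dadd_def dscale_def by auto

lemma restrict_dens_restrict_dens:
  "restrict_dens A B (restrict_dens A' B' \<phi>) = restrict_dens (\<lambda>k. A k \<and> A' k) (\<lambda>k. B k \<and> B' k) \<phi>"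
  unfolding restrict_dens_def by auto

lemma Kinner_restrict_dens_left:
  "Kinner q (restrict_dens A B \<psi>) \<phi> = Kinner q \<psi> (restrict_dens A B \<phi>)"
  unfolding Kinner_def restrict_dens_def by (intro Bochner_Integration.integral_cong) auto

lemma Kenergy_nonneg: "0 \<le> q \<Longrightarrow> 0 \<le> Kenergy q \<phi> k"
  unfolding Kenergy_def by (simp add: S1_nonneg S2_nonneg)

lemma Kenergy_restrict_dens_le:
  "0 \<le> q \<Longrightarrow> Kenergy q (restrict_dens A B \<phi>) k \<le> Kenergy q \<phi> k"
  unfolding Kenergy_def restrict_dens_def by (auto simp: S1_nonneg S2_nonneg)

lemma Kenergy_dsub_restrict_dens:
  "Kenergy q (dsub (restrict_dens A B \<phi>) (restrict_dens A' B' \<phi>)) k =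
   Kenergy q (restrict_dens (\<lambda>k. A k \<noteq> A' k) (\<lambda>k. B k \<noteq> B' k) \<phi>) k"
  unfolding Kenergy_def restrict_dens_def dsub_def by auto

lemma inK_restrict_dens:
  assumes "0 \<le> q" and [measurable]: "Measurable.pred borel A" "Measurable.pred borel B"
    and \<phi>: "inK q \<phi>"
  shows "inK q (restrict_dens A B \<phi>)"
proof -
  note [measurable] = \<phi>[unfolded inK_iff_integrable_Kenergy, THEN conjunct1]
    \<phi>[unfolded inK_iff_integrable_Kenergy, THEN conjunct2, THEN conjunct1]
  have [measurable]: "fst (restrict_dens A B \<phi>) \<in> borel_measurable borel"
    unfolding restrict_dens_def fst_conv by measurable
  have [measurable]: "snd (restrict_dens A B \<phi>) \<in> borel_measurable borel"
    unfolding restrict_dens_def snd_conv by measurable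
  have "integrable lborel (Kenergy q (restrict_dens A B \<phi>))"
  proof (rule Bochner_Integration.integrable_bound)
    show "integrable lborel (Kenergy q \<phi>)"
      using \<phi> by (simp add: inK_iff_integrable_Kenergy)
    show "Kenergy q (restrict_dens A B \<phi>) \<in> borel_measurable lborel"
      unfolding Kenergy_def by measurable
    show "AE k in lborel. norm (Kenergy q (restrict_dens A B \<phi>) k) \<le> norm (Kenergy q \<phi> k)"
      using Kenergy_nonneg Kenergy_restrict_dens_le \<open>0 \<le> q\<close> by simp
  qed
  then show ?thesis
    unfolding inK_iff_integrable_Kenergy by simp
qed

lemma tendsto_Knorm_restrict_dens:
  assumes "0 \<le> q" and \<phi>: "inK q \<phi>"
    and [measurable]: "\<And>i. Measurable.pred borel (A i)" "\<And>i. Measurable.pred borel (B i)"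
      "Measurable.pred borel A0" "Measurable.pred borel B0"
    and lim: "AE k in lborel. eventually (\<lambda>i. A i k = A0 k \<and> B i k = B0 k) sequentially"
  shows "(\<lambda>i. Knorm q (dsub (restrict_dens (A i) (B i) \<phi>) (restrict_dens A0 B0 \<phi>))) \<longlonglongrightarrow> 0"
proof -
  note [measurable] = \<phi>[unfolded inK_iff_integrable_Kenergy, THEN conjunct1]
    \<phi>[unfolded inK_iff_integrable_Kenergy, THEN conjunct2, THEN conjunct1]
  define D where
    "D i = Kenergy q (restrict_dens (\<lambda>k. A i k \<noteq> A0 k) (\<lambda>k. B i k \<noteq> B0 k) \<phi>)" for i
  have "(\<lambda>i. LINT k|lborel. D i k) \<longlonglongrightarrow> (LINT (k::real)|lborel. 0)"
  proof (rule integral_dominated_convergence)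
    show "integrable lborel (Kenergy q \<phi>)"
      using \<phi> by (simp add: inK_iff_integrable_Kenergy)
    show "D i \<in> borel_measurable lborel" for i
      unfolding D_def Kenergy_def restrict_dens_def fst_conv snd_conv by measurable
    show "AE k in lborel. norm (D i k) \<le> Kenergy q \<phi> k" for i
      unfolding D_def using Kenergy_nonneg Kenergy_restrict_dens_le \<open>0 \<le> q\<close> by simp
    show "AE k in lborel. (\<lambda>i. D i k) \<longlonglongrightarrow> 0"
      using lim
    proof eventually_elim
      case (elim k)
      then have "eventually (\<lambda>i. D i k = 0) sequentially"
        by eventually_elim (simp add: D_def Kenergy_def restrict_dens_def)
      then show ?case by (rule tendsto_eventually)
    qed
  qed simp
  then have "(\<lambda>i. sqrt (LINT k|lborel. D i k)) \<longlonglongrightarrow> 0"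
    using tendsto_real_sqrt by fastforce
  then show ?thesis
    unfolding Knorm_eq_sqrt_integral Kenergy_dsub_restrict_dens D_def .
qed

lemma ln_div_less_iff:
  fixes c q k :: real
  assumes "0 < c" "0 < q"
  shows "ln c / q < k \<longleftrightarrow> c < exp (q * k)"
proof -
  have "ln c / q < k \<longleftrightarrow> ln c < q * k"
    using pos_divide_less_eq[OF \<open>0 < q\<close>] by (simp add: mult.commute)
  also have "\<dots> \<longleftrightarrow> c < exp (q * k)"
    using \<open>0 < c\<close> ln_less_cancel_iff[of c "exp (q * k)"] by simp
  finally show ?thesis .
qed

lemma le_minus_ln_div_iff:
  fixes c q k :: real
  assumes "0 < c" "0 < q"
  shows "k \<le> - ln c / q \<longleftrightarrow> c \<le> exp (- (q * k))"
proof -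
  have "k \<le> - ln c / q \<longleftrightarrow> ln c \<le> - (q * k)"
    using pos_le_divide_eq[OF \<open>0 < q\<close>, of k "- ln c"] by (simp add: mult.commute) linarith
  also have "\<dots> \<longleftrightarrow> c \<le> exp (- (q * k))"
    using \<open>0 < c\<close> ln_le_cancel_iff[of c "exp (- (q * k))"] by simp
  finally show ?thesis .
qed

lemma eventually_threshold_stable:
  fixes f :: "'a \<Rightarrow> real"
  assumes "(f \<longlongrightarrow> s) F" "c \<noteq> s"
  shows "\<forall>\<^sub>F x in F. (c \<le> f x \<longleftrightarrow> c \<le> s) \<and> (c < f x \<longleftrightarrow> c < s)"
proof (cases "c < s")
  case True
  show ?thesis
    using order_tendstoD(1)[OF assms(1) True] by eventually_elim (use True in auto)
next
  case False
  with \<open>c \<noteq> s\<close> have "s < c" by simp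
  show ?thesis
    using order_tendstoD(2)[OF assms(1) \<open>s < c\<close>] by eventually_elim (use \<open>s < c\<close> in auto)
qed

lemma RS_has_integral_one: "RS_has_integral (\<lambda>_. 1) F a b (F b - F a)"
  unfolding RS_has_integral_def
proof (intro allI impI exI[of _ 1] conjI)
  fix \<epsilon> :: real and n :: nat and x \<xi> :: "nat \<Rightarrow> real"
  assume "0 < \<epsilon>" and "x 0 = a \<and> x n = b \<and>
    (\<forall>i<n. x i < x (Suc i) \<and> x (Suc i) - x i < 1 \<and> x i \<le> \<xi> i \<and> \<xi> i \<le> x (Suc i))"
  moreover have "(\<Sum>i<n. F (x (Suc i)) - F (x i)) = F (x n) - F (x 0)"
    by (rule sum_lessThan_telescope)
  ultimately show "cmod ((\<Sum>i<n. 1 * (F (x (Suc i)) - F (x i))) - (F b - F a)) < \<epsilon>"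
    by simp
qed simp

text \<open>\<open>Efam q t\<close> multiplies the two components by the indicators of \<open>Esupp1 q t\<close> and
  \<open>Esupp2 q t\<close>: for \<open>t < 0\<close> these are \<open>\<emptyset>\<close> and \<open>(ln (-2t)/q, -ln (-2t)/q]\<close>, for \<open>t > 0\<close> the
  complement of \<open>(ln (2t)/q, -ln (2t)/q]\<close> and \<open>\<real>\<close>. Moving the thresholds through \<open>exp\<close> gives
  one formula for all \<open>t\<close> that is visibly monotone in \<open>t\<close>.\<close>

definition Esupp1 :: "real \<Rightarrow> real \<Rightarrow> real \<Rightarrow> bool" where
  "Esupp1 q t k \<longleftrightarrow> exp (q * k) \<le> 2 * t \<or> exp (- (q * k)) < 2 * t"

definition Esupp2 :: "real \<Rightarrow> real \<Rightarrow> real \<Rightarrow> bool" where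
  "Esupp2 q t k \<longleftrightarrow> - exp (q * k) < 2 * t \<and> - exp (- (q * k)) \<le> 2 * t"

lemma Efam_eq_restrict_dens:
  assumes q: "0 < q" and t: "t \<in> {-1/2..1/2}"
  shows "Efam q t = restrict_dens (Esupp1 q t) (Esupp2 q t)"
proof (cases t "0 :: real" rule: linorder_cases)
  case less
  define a where "a = ln (- 2 * t) / q"
  have "a \<le> 0"
    unfolding a_def using t less q by (intro divide_nonpos_pos) auto
  have E2: "Esupp2 q t k \<longleftrightarrow> a < k \<and> k \<le> - a" for k
    using ln_div_less_iff[of "- 2 * t" q k] le_minus_ln_div_iff[of "- 2 * t" q k] less q
    unfolding Esupp2_def a_def by auto
  have E1: "\<not> Esupp1 q t k" for k
    unfolding Esupp1_def using less exp_gt_zero[of "q * k"] exp_gt_zero[of "- (q * k)"]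
    by linarith
  have "Efam q t = opsub (P2 (ereal (- a))) (P2 (ereal a))"
    using less unfolding Efam_def a_def by simp
  then show ?thesis
    using \<open>a \<le> 0\<close> unfolding opsub_def dsub_def P2_def restrict_dens_def E2
    by (auto simp: fun_eq_iff E1)
next
  case equal
  then show ?thesis
    unfolding Efam_def Esupp1_def Esupp2_def P2_def restrict_dens_def
    by (auto simp: fun_eq_iff)
next
  case greater
  define b where "b = ln (2 * t) / q"
  have "b \<le> 0"
    unfolding b_def using t greater q by (intro divide_nonpos_pos) auto
  have E1: "Esupp1 q t k \<longleftrightarrow> k \<le> b \<or> - b < k" for k
    using ln_div_less_iff[of "2 * t" q k] le_minus_ln_div_iff[of "2 * t" q k] greater q
    unfolding Esupp1_def b_def by auto
  have E2: "Esupp2 q t k" for k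
    unfolding Esupp2_def using greater exp_gt_zero[of "q * k"] exp_gt_zero[of "- (q * k)"]
    by linarith
  have "Efam q t = opadd (opsub (P1 (ereal b)) (P1 (ereal (- b)))) Iop"
    using greater unfolding Efam_def b_def by simp
  then show ?thesis
    using \<open>b \<le> 0\<close> unfolding opadd_def opsub_def dadd_def dsub_def P1_def P2_def Iop_def
      restrict_dens_def E1
    by (auto simp: fun_eq_iff E2)
qed

lemma Esupp1_min: "Esupp1 q (min t s) = (\<lambda>k. Esupp1 q t k \<and> Esupp1 q s k)"
  unfolding Esupp1_def min_def by auto

lemma Esupp2_min: "Esupp2 q (min t s) = (\<lambda>k. Esupp2 q t k \<and> Esupp2 q s k)"
  unfolding Esupp2_def min_def by auto

lemma not_Esupp1_bot: "t \<le> -1/2 \<Longrightarrow> \<not> Esupp1 q t k"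
  unfolding Esupp1_def using exp_gt_zero[of "q * k"] exp_gt_zero[of "- (q * k)"] by linarith

lemma not_Esupp2_bot:
  assumes "t \<le> -1/2"
  shows "\<not> Esupp2 q t k"
proof
  assume "Esupp2 q t k"
  then have "1 < exp (q * k)" "1 \<le> exp (- (q * k))"
    unfolding Esupp2_def using assms by linarith+
  then show False
    by simp
qed

lemma Esupp1_top:
  assumes "1/2 \<le> t"
  shows "Esupp1 q t k"
proof (cases "q * k \<le> 0")
  case True
  then have "exp (q * k) \<le> 1"
    by simp
  then show ?thesis
    unfolding Esupp1_def using assms by linarith
next
  case False
  then have "exp (- (q * k)) < 1"
    by simp
  then show ?thesis
    unfolding Esupp1_def using assms by linarith
qed

lemma Esupp2_top: "0 \<le> t \<Longrightarrow> Esupp2 q t k"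
  unfolding Esupp2_def using exp_gt_zero[of "q * k"] exp_gt_zero[of "- (q * k)"] by linarith

lemma Esupp1_measurable [measurable]: "Measurable.pred borel (Esupp1 q t)"
  unfolding Esupp1_def by measurable

lemma Esupp2_measurable [measurable]: "Measurable.pred borel (Esupp2 q t)"
  unfolding Esupp2_def by measurable

lemma eventually_Esupp_eq:
  assumes lim: "(f \<longlongrightarrow> s) F"
    and k: "exp (q * k) \<notin> {2 * s, - 2 * s}" "exp (- (q * k)) \<notin> {2 * s, - 2 * s}"
  shows "\<forall>\<^sub>F x in F. Esupp1 q (f x) k = Esupp1 q s k \<and> Esupp2 q (f x) k = Esupp2 q s k"
proof -
  have lim2: "((\<lambda>x. 2 * f x) \<longlongrightarrow> 2 * s) F"
    using lim by (intro tendsto_mult tendsto_const)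
  have "exp (q * k) \<noteq> 2 * s" "exp (- (q * k)) \<noteq> 2 * s"
    "- exp (q * k) \<noteq> 2 * s" "- exp (- (q * k)) \<noteq> 2 * s"
    using k by auto
  from this[THEN eventually_threshold_stable[OF lim2]] show ?thesis
    by eventually_elim (simp add: Esupp1_def Esupp2_def)
qed

lemma finite_Esupp_jumps:
  fixes q s :: real
  assumes "q \<noteq> 0"
  shows "finite {k. exp (q * k) \<in> {2 * s, - 2 * s} \<or> exp (- (q * k)) \<in> {2 * s, - 2 * s}}"
proof -
  have "inj (\<lambda>k. exp (q * k))" "inj (\<lambda>k. exp (- (q * k)))"
    using assms by (auto simp: inj_def)
  then have "finite ((\<lambda>k. exp (q * k)) -` {2 * s, - 2 * s} \<union>
      (\<lambda>k. exp (- (q * k))) -` {2 * s, - 2 * s})"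
    by (intro finite_UnI finite_vimageI) auto
  then show ?thesis
    by (simp add: vimage_def Collect_disj_eq)
qed

lemma Efam_tendsto_sequentially:
  assumes q: "0 < q" and \<phi>: "inK q \<phi>" and s: "s \<in> {-1/2..1/2}"
    and X: "\<And>i. X i \<in> {-1/2..1/2}" and lim: "X \<longlonglongrightarrow> s"
  shows "(\<lambda>i. Knorm q (dsub (Efam q (X i) \<phi>) (Efam q s \<phi>))) \<longlonglongrightarrow> 0"
proof -
  have "AE k in lborel. \<forall>\<^sub>F i in sequentially.
      Esupp1 q (X i) k = Esupp1 q s k \<and> Esupp2 q (X i) k = Esupp2 q s k"
  proof (rule AE_I')
    show "{k. exp (q * k) \<in> {2 * s, - 2 * s} \<or> exp (- (q * k)) \<in> {2 * s, - 2 * s}}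
        \<in> null_sets lborel"
      using q by (intro finite_imp_null_set_lborel finite_Esupp_jumps) simp
  qed (auto intro: eventually_Esupp_eq[OF lim])
  then show ?thesis
    unfolding Efam_eq_restrict_dens[OF q X] Efam_eq_restrict_dens[OF q s]
    using q \<phi> by (intro tendsto_Knorm_restrict_dens) auto
qed

lemma Efam_tendsto_within:
  assumes "0 < q" "inK q \<phi>" "s \<in> {-1/2..1/2}"
  shows "((\<lambda>t. Knorm q (dsub (Efam q t \<phi>) (Efam q s \<phi>))) \<longlongrightarrow> 0) (at s within {-1/2..1/2})"
  unfolding tendsto_at_iff_sequentially comp_def
  using assms by (auto intro: Efam_tendsto_sequentially)

lemma Efam_tendsto_right:
  assumes "0 < q" "inK q \<phi>" "s \<in> {-1/2..<1/2}"
  shows "((\<lambda>t. Knorm q (dsub (Efam q t \<phi>) (Efam q s \<phi>))) \<longlongrightarrow> 0) (at_right s)"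
proof -
  have "at_right s = at s within {s<..<1/2}"
    by (rule at_within_nhd[where S = "{..<1/2}"]) (use assms in auto)
  moreover have "{s<..<1/2} \<subseteq> {-1/2..1/2}"
    using assms(3) by auto
  ultimately show ?thesis
    using Efam_tendsto_within[OF assms(1,2)] assms(3) tendsto_within_subset by fastforce
qed

lemma inK_Efam: "0 < q \<Longrightarrow> t \<in> {-1/2..1/2} \<Longrightarrow> inK q \<phi> \<Longrightarrow> inK q (Efam q t \<phi>)"
  by (simp add: Efam_eq_restrict_dens inK_restrict_dens)

lemma Efam_linear:
  "0 < q \<Longrightarrow> t \<in> {-1/2..1/2} \<Longrightarrow>
    Efam q t (dadd (dscale a \<psi>) \<phi>) = dadd (dscale a (Efam q t \<psi>)) (Efam q t \<phi>)"
  by (simp add: Efam_eq_restrict_dens restrict_dens_linear)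

lemma Kinner_Efam_left:
  "0 < q \<Longrightarrow> t \<in> {-1/2..1/2} \<Longrightarrow> Kinner q (Efam q t \<psi>) \<phi> = Kinner q \<psi> (Efam q t \<phi>)"
  by (simp add: Efam_eq_restrict_dens Kinner_restrict_dens_left)

lemma Efam_Efam:
  assumes q: "0 < q" and t: "t \<in> {-1/2..1/2}" and s: "s \<in> {-1/2..1/2}"
  shows "Efam q t (Efam q s \<phi>) = Efam q (min t s) \<phi>"
proof -
  have m: "min t s \<in> {-1/2..1/2}"
    using t s by auto
  show ?thesis
    unfolding Efam_eq_restrict_dens[OF q t] Efam_eq_restrict_dens[OF q s]
      Efam_eq_restrict_dens[OF q m] restrict_dens_restrict_dens Esupp1_min Esupp2_min ..
qed

lemma Efam_bot: "0 < q \<Longrightarrow> Efam q (-1/2) \<phi> = dzero"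
  by (simp add: Efam_eq_restrict_dens restrict_dens_def dzero_def
      not_Esupp1_bot not_Esupp2_bot)

lemma Efam_top: "0 < q \<Longrightarrow> Efam q (1/2) \<phi> = \<phi>"
  by (simp add: Efam_eq_restrict_dens restrict_dens_def Esupp1_top Esupp2_top)

lemma Iop_apply: "Iop \<phi> = \<phi>"
  by (simp add: Iop_def opadd_def dadd_def P1_def P2_def)

lemma RS_has_integral_Kinner_Efam:
  assumes "0 < q"
  shows "RS_has_integral (\<lambda>_. 1) (\<lambda>t. Kinner q f (Efam q t g)) (-1/2) (1/2) (Kinner q f g)"
  using RS_has_integral_one[of "\<lambda>t. Kinner q f (Efam q t g)" "-1/2" "1/2"]
  unfolding Efam_top[OF assms] Efam_bot[OF assms] by (simp add: Kinner_def dzero_def)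

theorem proposition4p3:
  fixes R r :: real
  assumes "R > 0" and "r > 0"
  defines "q \<equiv> q1 R r"
  shows
    \<comment> \<open>each E(t) is an orthogonal projection on K (linear, idempotent, self-adjoint)\<close>
    "(\<forall>t\<in>{-1/2..1/2}.
        (\<forall>\<phi>. inK q \<phi> \<longrightarrow> inK q (Efam q t \<phi>)) \<and>
        (\<forall>a \<psi> \<phi>. inK q \<psi> \<and> inK q \<phi> \<longrightarrow>
            Keq (Efam q t (dadd (dscale a \<psi>) \<phi>)) (dadd (dscale a (Efam q t \<psi>)) (Efam q t \<phi>))) \<and>
        (\<forall>\<phi>. inK q \<phi> \<longrightarrow> Keq (Efam q t (Efam q t \<phi>)) (Efam q t \<phi>)) \<and>
        (\<forall>\<psi> \<phi>. inK q \<psi> \<and> inK q \<phi> \<longrightarrow> Kinner q (Efam q t \<psi>) \<phi> = Kinner q \<psi> (Efam q t \<phi>)))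
   \<and> (\<forall>t\<in>{-1/2..1/2}. \<forall>s\<in>{-1/2..1/2}. \<forall>\<phi>. inK q \<phi> \<longrightarrow>
        Keq (Efam q t (Efam q s \<phi>)) (Efam q (min t s) \<phi>))
   \<and> (\<forall>s\<in>{-1/2..<1/2}. \<forall>\<phi>. inK q \<phi> \<longrightarrow>
        ((\<lambda>t. Knorm q (dsub (Efam q t \<phi>) (Efam q s \<phi>))) \<longlongrightarrow> 0) (at_right s))
   \<and> (\<forall>\<phi>. inK q \<phi> \<longrightarrow> Keq (Efam q (-1/2) \<phi>) dzero)
   \<and> (\<forall>\<phi>. inK q \<phi> \<longrightarrow> Keq (Efam q (1/2) \<phi>) (Iop \<phi>))
   \<and> (\<forall>f g. inK q f \<and> inK q g \<longrightarrow>
        RS_has_integral (\<lambda>t. 1) (\<lambda>t. Kinner q f (Efam q t g)) (-1/2) (1/2) (Kinner q f g))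
   \<and> (\<forall>s\<in>{-1/2..1/2}. \<forall>\<phi>. inK q \<phi> \<longrightarrow>
        ((\<lambda>t. Knorm q (dsub (Efam q t \<phi>) (Efam q s \<phi>))) \<longlongrightarrow> 0) (at s within {-1/2..1/2}))"
proof -
  have q: "0 < q"
    unfolding q_def using assms(1,2) by (rule q1_pos)
  show ?thesis
    using inK_Efam[OF q] Efam_linear[OF q] Kinner_Efam_left[OF q] Efam_Efam[OF q]
      Efam_tendsto_right[OF q] Efam_tendsto_within[OF q] Efam_bot[OF q] Efam_top[OF q]
      RS_has_integral_Kinner_Efam[OF q]
    by (auto simp: Keq_def Iop_apply)
qed

end
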